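(* Let $k\ge 2$. In the online version of balanced interval $k$-coloring, the imbalance is unbounded: for every (deterministic) online algorithm and every $M\in\mathbb{N}$, there is a finite input sequence of intervals on which the coloring produced by the algorithm has imbalance greater than $M$.
   Context: Online model: closed intervals arrive one at a time in order of their startpoints; upon arrival the full interval (including its endpoint) is revealed and the algorithm must irrevocably assign it a color from $\{1,\dots,k\}$. For a coloring $\chi$ of a finite set of intervals, let $c_i(x)$ be the number of intervals containing $x$ with color $i$; the imbalance of $\chi$ is $\max_{x\in\mathbb{R}}\max_{i,j}|c_i(x)-c_j(x)|$. *)

theory Defs
  imports Complex_Main
begin

type_synonym interval = "real \<times> real"

text \<open>A deterministic online algorithm: given the previously arrived intervals
(in arrival order) and the newly arrived interval (fully revealed), it returns a color.
Its own earlier choices are determined by the earlier prefixes, so this captures all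
deterministic online algorithms.\<close>
type_synonym online_alg = "interval list \<Rightarrow> interval \<Rightarrow> nat"

definition valid_input :: "interval list \<Rightarrow> bool" where
  "valid_input xs \<longleftrightarrow> (\<forall>I\<in>set xs. fst I \<le> snd I) \<and> sorted (map fst xs)"

definition run_alg :: "online_alg \<Rightarrow> interval list \<Rightarrow> nat list" where
  "run_alg A xs = map (\<lambda>n. A (take n xs) (xs ! n)) [0..<length xs]"

definition color_count :: "interval list \<Rightarrow> nat list \<Rightarrow> nat \<Rightarrow> real \<Rightarrow> nat" where
  "color_count xs cs i x =
     card {n. n < length xs \<and> fst (xs ! n) \<le> x \<and> x \<le> snd (xs ! n) \<and> cs ! n = i}"

definition imbalance :: "nat \<Rightarrow> interval list \<Rightarrow> nat list \<Rightarrow> nat" where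
  "imbalance k xs cs = Max {nat \<bar>int (color_count xs cs i x) - int (color_count xs cs j x)\<bar>
                           | x i j. i \<in> {1..k} \<and> j \<in> {1..k}}"

end

theory Submission
  imports Defs
begin

text \<open>The adversary keeps a window \<open>(a, b)\<close> and always presents the interval \<open>[0, m]\<close>, where
  \<open>m\<close> is the midpoint of the window. If the algorithm uses color 1, the window moves to \<open>(a, m)\<close>,
  otherwise to \<open>(m, b)\<close>. Hence every point \<open>x\<^sub>0\<close> of the final window lies in exactly those
  intervals that got color 1: at \<open>x\<^sub>0\<close> color 1 is seen as often as at \<open>0\<close>, color 2 not at all,
  so the imbalance is at least the number \<open>c\<^sub>1\<close> of intervals with color 1. At \<open>0\<close>, which lies in
  all \<open>n\<close> intervals, each of the \<open>k\<close> colors occurs at most \<open>c\<^sub>1\<close> plus the imbalance times, so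
  \<open>n \<le> 2k\<close> times the imbalance. Taking \<open>n = k (2M + 1)\<close> gives imbalance \<open>> M\<close>.\<close>

lemma color_count_le_length: "color_count xs cs c x \<le> length xs"
proof -
  have "{n. n < length xs \<and> fst (xs ! n) \<le> x \<and> x \<le> snd (xs ! n) \<and> cs ! n = c} \<subseteq> {..<length xs}"
    by auto
  from card_mono[OF _ this] show ?thesis by (simp add: color_count_def)
qed

lemma color_count_le_imbalance:
  assumes "i \<in> {1..k}" and "j \<in> {1..k}"
  shows "color_count xs cs i x \<le> color_count xs cs j x + imbalance k xs cs"
proof -
  let ?S = "{nat \<bar>int (color_count xs cs i x) - int (color_count xs cs j x)\<bar>
             | x i j. i \<in> {1..k} \<and> j \<in> {1..k}}"
  have "?S \<subseteq> {..length xs}"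
  proof
    fix v assume "v \<in> ?S"
    then obtain y i' j' where "v = nat \<bar>int (color_count xs cs i' y) - int (color_count xs cs j' y)\<bar>"
      by blast
    then show "v \<in> {..length xs}"
      using color_count_le_length[of xs cs i' y] color_count_le_length[of xs cs j' y] by auto
  qed
  then have "finite ?S"
    using finite_subset by blast
  moreover have "nat \<bar>int (color_count xs cs i x) - int (color_count xs cs j x)\<bar> \<in> ?S"
    using assms by blast
  ultimately have "nat \<bar>int (color_count xs cs i x) - int (color_count xs cs j x)\<bar> \<le> Max ?S"
    by (rule Max_ge)
  then show ?thesis
    unfolding imbalance_def by linarith
qed

lemma length_le_imbalance:
  assumes "1 \<le> k"
    and colors: "\<forall>n<length xs. cs ! n \<in> {1..k}"
    and common_point: "\<forall>I\<in>set xs. fst I \<le> x \<and> x \<le> snd I"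
  shows "length xs \<le> k * (color_count xs cs 1 x + imbalance k xs cs)"
proof -
  let ?C = "\<lambda>c. {n. n < length xs \<and> fst (xs ! n) \<le> x \<and> x \<le> snd (xs ! n) \<and> cs ! n = c}"
  have "{..<length xs} = (\<Union>c\<in>{1..k}. ?C c)"
    using colors common_point by (auto simp: all_set_conv_all_nth)
  then have "length xs = card (\<Union>c\<in>{1..k}. ?C c)"
    by (metis card_lessThan)
  also have "\<dots> \<le> (\<Sum>c\<in>{1..k}. color_count xs cs c x)"
    unfolding color_count_def by (rule card_UN_le) simp
  also have "\<dots> \<le> (\<Sum>c\<in>{1..k}. color_count xs cs 1 x + imbalance k xs cs)"
    using \<open>1 \<le> k\<close> by (intro sum_mono color_count_le_imbalance) auto
  finally show ?thesis
    by simp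
qed

definition mid :: "real \<times> real \<Rightarrow> real" where
  "mid w = (fst w + snd w) / 2"

fun adv_window :: "online_alg \<Rightarrow> nat \<Rightarrow> real \<times> real" where
  "adv_window A 0 = (0, 1)"
| "adv_window A (Suc n) =
     (let w = adv_window A n in
      if A (map (\<lambda>i. (0, mid (adv_window A i))) [0..<n]) (0, mid w) = 1
      then (fst w, mid w) else (mid w, snd w))"

definition adv_input :: "online_alg \<Rightarrow> nat \<Rightarrow> interval list" where
  "adv_input A n = map (\<lambda>i. (0, mid (adv_window A i))) [0..<n]"

definition adv_color :: "online_alg \<Rightarrow> nat \<Rightarrow> nat" where
  "adv_color A i = A (adv_input A i) (0, mid (adv_window A i))"

lemma adv_window_Suc:
  "adv_window A (Suc n) =
     (if adv_color A n = 1 then (fst (adv_window A n), mid (adv_window A n))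
      else (mid (adv_window A n), snd (adv_window A n)))"
  by (simp add: adv_color_def adv_input_def Let_def)

declare adv_window.simps(2) [simp del]

lemma adv_window_nonneg_nonempty: "0 \<le> fst (adv_window A n) \<and> fst (adv_window A n) < snd (adv_window A n)"
  by (induction n) (auto simp: adv_window_Suc mid_def)

lemma adv_window_separates:
  assumes "i < n" and "fst (adv_window A n) < x" and "x < snd (adv_window A n)"
  shows "x \<le> mid (adv_window A i) \<longleftrightarrow> adv_color A i = 1"
  using assms
proof (induction n)
  case 0
  then show ?case by simp
next
  case (Suc n)
  then show ?case
    by (cases "i = n") (auto simp: adv_window_Suc mid_def split: if_splits)
qed

lemma mid_adv_window_nonneg: "0 \<le> mid (adv_window A n)"
  using adv_window_nonneg_nonempty[of A n] by (simp add: mid_def)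

lemma length_adv_input [simp]: "length (adv_input A n) = n"
  by (simp add: adv_input_def)

lemma nth_adv_input: "i < n \<Longrightarrow> adv_input A n ! i = (0, mid (adv_window A i))"
  by (simp add: adv_input_def)

lemma run_alg_adv_input: "i < n \<Longrightarrow> run_alg A (adv_input A n) ! i = adv_color A i"
  by (simp add: run_alg_def adv_input_def adv_color_def take_map)

lemma adv_input_contains_origin: "\<forall>I\<in>set (adv_input A n). fst I \<le> 0 \<and> 0 \<le> snd I"
  by (simp add: adv_input_def mid_adv_window_nonneg)

lemma valid_input_adv_input: "valid_input (adv_input A n)"
proof -
  have "map fst (adv_input A n) = replicate n 0"
    by (simp add: adv_input_def o_def map_replicate_const)
  then show ?thesis
    unfolding valid_input_def using adv_input_contains_origin[of A n] by force
qed

lemma color_count_adv_input_origin: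
  "color_count (adv_input A n) (run_alg A (adv_input A n)) c 0 = card {i. i < n \<and> adv_color A i = c}"
  unfolding color_count_def
  by (rule arg_cong[where f = card])
    (auto simp: nth_adv_input run_alg_adv_input mid_adv_window_nonneg)

lemma color_count_adv_input_mid:
  "color_count (adv_input A n) (run_alg A (adv_input A n)) c (mid (adv_window A n)) =
     (if c = 1 then card {i. i < n \<and> adv_color A i = 1} else 0)"
proof -
  let ?x = "mid (adv_window A n)"
  have inside: "fst (adv_window A n) < ?x" "?x < snd (adv_window A n)" "0 \<le> ?x"
    using adv_window_nonneg_nonempty[of A n] by (auto simp: mid_def)
  have "{j. j < n \<and> fst (adv_input A n ! j) \<le> ?x \<and> ?x \<le> snd (adv_input A n ! j)
            \<and> run_alg A (adv_input A n) ! j = c}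
        = (if c = 1 then {i. i < n \<and> adv_color A i = 1} else {})"
    using adv_window_separates[OF _ inside(1,2)] inside(3)
    by (auto simp: nth_adv_input run_alg_adv_input)
  then show ?thesis
    by (simp add: color_count_def)
qed

theorem theorem8:
  fixes k :: nat and A :: online_alg and M :: nat
  assumes "k \<ge> 2"
    and "\<And>xs I. A xs I \<in> {1..k}"
  shows "\<exists>xs. valid_input xs \<and> imbalance k xs (run_alg A xs) > M"
proof -
  define n where "n = k * (2 * M + 1)"
  define xs where "xs = adv_input A n"
  define cs where "cs = run_alg A xs"
  have "color_count xs cs 1 (mid (adv_window A n)) \<le>
          color_count xs cs 2 (mid (adv_window A n)) + imbalance k xs cs"
    using \<open>k \<ge> 2\<close> by (intro color_count_le_imbalance) auto
  then have ones_le: "color_count xs cs 1 0 \<le> imbalance k xs cs"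
    by (simp add: xs_def cs_def color_count_adv_input_mid color_count_adv_input_origin)
  have "\<forall>i<length xs. cs ! i \<in> {1..k}"
    using assms(2) by (simp add: xs_def cs_def run_alg_def)
  then have "n \<le> k * (color_count xs cs 1 0 + imbalance k xs cs)"
    using length_le_imbalance[of k xs cs 0] adv_input_contains_origin[of A n] \<open>k \<ge> 2\<close>
    by (simp add: xs_def)
  also have "\<dots> \<le> k * (2 * imbalance k xs cs)"
    using ones_le by simp
  finally have "k * (2 * M + 1) \<le> k * (2 * imbalance k xs cs)"
    by (simp add: n_def)
  then have "2 * M + 1 \<le> 2 * imbalance k xs cs"
    using \<open>k \<ge> 2\<close> by (subst (asm) mult_le_cancel1) simp
  then have "M < imbalance k xs cs"
    by simp
  then show ?thesis
    using valid_input_adv_input cs_def xs_def by blast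
qed

end
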